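(* Let $n\ge1$, identify $\mathbb{R}^{n+1}=\mathbb{R}^n\times\mathbb{R}$, let $f\colon\mathbb{R}^n\to(0,\infty)$ be continuous with epigraph $L=\{(x,y)\mid f(x)\le y\}$, and let $K\subset\mathbb{R}^{n+1}$ be a closed set with $K\cap L=\emptyset$. Suppose there exist no point $x_0\in\mathbb{R}^n$ and real numbers $0<y_1<y_2$ such that $(x_0,y_1)\notin K$ and $(x_0,y_2)\in K$. Then for every $x\in\mathbb{R}^n$ the vertical line $\{(x,y)\mid y\in\mathbb{R}\}$ contains at most one point $p$ with $d(p,K)=d(p,L)$.
   Context: $d(p,A)=\inf\{|p-q|\mid q\in A\}$ (Euclidean distance). *)

theory Defs
  imports "HOL-Analysis.Analysis"
begin

text \<open>Distance from a point to a set, d(p,A) = inf { |p - q| : q in A },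
  valued in the extended reals so that d(p, {}) = +infinity (the usual inf convention).\<close>
definition setdist_e :: "'a::metric_space \<Rightarrow> 'a set \<Rightarrow> ereal" where
  "setdist_e p A = (INF q\<in>A. ereal (dist p q))"

end

theory Submission
  imports Defs
begin

text \<open>Let p1 = (x, y1) and p2 = (x, y2) with y1 < y2 both be equidistant from K and L.
  Take l = (lz, lw) in L nearest to p1 and k = (kz, kw) in K nearest to p2; then l is no
  farther from p1 than any point of K, and k no farther from p2 than any point of L.
  Comparing l and k as seen from p1 and from p2 gives lw \<le> kw. Since L is closed upwards
  and, by hypothesis, K is closed downwards in the upper half space, (lz, kw) is in L and
  (kz, lw) is in K, so lz and kz have the same distance h from x, and then lw \<le> y1.
  Hence f lz < y2, and by continuity L contains a point at height y2 at horizontal distance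
  less than h from x, i.e. closer to p2 than k. If h = 0, then (x, kw) lies in both K and L.\<close>

lemma setdist_e_le: "q \<in> A \<Longrightarrow> setdist_e p A \<le> ereal (dist p q)"
  unfolding setdist_e_def by (rule INF_lower)

lemma setdist_e_attained:
  fixes A :: "'a::heine_borel set"
  assumes "closed A" "A \<noteq> {}"
  obtains a where "a \<in> A" "setdist_e p A = ereal (dist p a)"
proof -
  obtain a where a: "a \<in> A" "\<And>b. b \<in> A \<Longrightarrow> dist p a \<le> dist p b"
    using distance_attains_inf[OF assms] by metis
  have "setdist_e p A = ereal (dist p a)"
  proof (rule antisym)
    show "setdist_e p A \<le> ereal (dist p a)"
      using a(1) by (rule setdist_e_le)
    show "ereal (dist p a) \<le> setdist_e p A"
      unfolding setdist_e_def using a by (intro INF_greatest) auto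
  qed
  with a(1) that show ?thesis by blast
qed

lemma nearest_point_of_equidistant:
  fixes A B :: "'a::heine_borel set"
  assumes "closed A" "A \<union> B \<noteq> {}" "setdist_e p A = setdist_e p B"
  obtains a where "a \<in> A" "\<And>q. q \<in> A \<union> B \<Longrightarrow> dist p a \<le> dist p q"
proof -
  have "A \<noteq> {}"
  proof
    assume "A = {}"
    then obtain q where "q \<in> B" using assms(2) by blast
    have "setdist_e p A = \<infinity>"
      using \<open>A = {}\<close> by (simp add: setdist_e_def top_ereal_def)
    with assms(3) setdist_e_le[OF \<open>q \<in> B\<close>, of p] show False by simp
  qed
  then obtain a where a: "a \<in> A" "setdist_e p A = ereal (dist p a)"
    using setdist_e_attained[OF assms(1)] by metis
  have "dist p a \<le> dist p q" if "q \<in> A \<union> B" for q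
    using that setdist_e_le[of q A p] setdist_e_le[of q B p] a(2) assms(3) by auto
  with a(1) that show ?thesis by blast
qed

lemma dist_Pair_same_height_le_iff:
  fixes x z z' :: "'a::metric_space" and y w :: real
  shows "dist (x, y) (z, w) \<le> dist (x, y) (z', w) \<longleftrightarrow> dist x z \<le> dist x z'"
  by (simp add: dist_Pair_Pair power2_le_iff_abs_le)

lemma dist_Pair_same_base_le_iff:
  fixes x z :: "'a::metric_space" and y w w' :: real
  shows "dist (x, y) (z, w) \<le> dist (x, y) (z, w') \<longleftrightarrow> \<bar>y - w\<bar> \<le> \<bar>y - w'\<bar>"
  by (simp add: dist_Pair_Pair dist_real_def abs_le_square_iff)

lemma dist_vertical_exchange:
  fixes x :: "'a::metric_space" and a b :: "'a \<times> real"
  assumes "y\<^sub>1 < y\<^sub>2"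
    and "dist (x, y\<^sub>1) a \<le> dist (x, y\<^sub>1) b" and "dist (x, y\<^sub>2) b \<le> dist (x, y\<^sub>2) a"
  shows "snd a \<le> snd b"
proof -
  obtain az aw bz bw where ab: "a = (az, aw)" "b = (bz, bw)" by fastforce
  have "(y\<^sub>2 - y\<^sub>1) * (aw - bw) \<le> 0"
    using assms(2,3) unfolding ab
    by (simp add: dist_Pair_Pair dist_real_def power2_eq_square algebra_simps)
  with assms(1) show ?thesis by (simp add: ab mult_le_0_iff)
qed

lemma le_of_nearest_on_interval:
  fixes y w :: real
  assumes "0 < w" "\<And>v. 0 < v \<Longrightarrow> v \<le> w \<Longrightarrow> \<bar>y - w\<bar> \<le> \<bar>y - v\<bar>"
  shows "w \<le> y"
proof (rule ccontr)
  assume "\<not> w \<le> y"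
  define v where "v = (w + max y 0) / 2"
  have "0 < v" "v \<le> w" "\<bar>y - v\<bar> < \<bar>y - w\<bar>"
    using \<open>\<not> w \<le> y\<close> \<open>0 < w\<close> by (auto simp: v_def)
  with assms(2) show False by fastforce
qed

lemma sublevel_point_closer:
  fixes f :: "'a::real_normed_vector \<Rightarrow> real"
  assumes "isCont f z" "f z < c" "z \<noteq> x"
  obtains z' where "f z' < c" "dist x z' < dist x z"
proof -
  have "((\<lambda>s. x + s *\<^sub>R (z - x)) \<longlongrightarrow> x + 1 *\<^sub>R (z - x)) (at_left 1)"
    by (intro tendsto_intros)
  then have "((\<lambda>s. f (x + s *\<^sub>R (z - x))) \<longlongrightarrow> f z) (at_left 1)"
    using isCont_tendsto_compose[OF assms(1)] by simp
  then have "eventually (\<lambda>s. f (x + s *\<^sub>R (z - x)) < c) (at_left 1)"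
    using assms(2) by (rule order_tendstoD)
  moreover have "eventually (\<lambda>s. s \<in> {0<..<1}) (at_left (1::real))"
    by (rule eventually_at_left_real) simp
  ultimately have "eventually (\<lambda>s. f (x + s *\<^sub>R (z - x)) < c \<and> s \<in> {0<..<1}) (at_left 1)"
    by (rule eventually_conj)
  then obtain s where s: "s \<in> {0<..<1}" "f (x + s *\<^sub>R (z - x)) < c"
    using eventually_happens'[OF trivial_limit_at_left_real] by blast
  have "dist x (x + s *\<^sub>R (z - x)) = s * dist x z"
    using s(1) by (simp add: dist_norm norm_minus_commute)
  also have "\<dots> < dist x z"
    using s(1) assms(3) by simp
  finally show ?thesis using s(2) that by blast
qed

lemma closed_epigraph_UNIV:
  fixes f :: "'a::topological_space \<Rightarrow> real"
  assumes "continuous_on UNIV f"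
  shows "closed (epigraph UNIV f)"
  unfolding epigraph_def
  by (simp, intro closed_Collect_le continuous_on_compose2[OF assms] continuous_intros) auto

lemma no_equidistant_pair_on_vertical:
  fixes f :: "'a::real_normed_vector \<Rightarrow> real" and K :: "('a \<times> real) set"
  defines "L \<equiv> epigraph UNIV f"
  assumes f_cont: "continuous_on UNIV f" and f_pos: "\<And>x. f x > 0"
    and K_disj: "K \<inter> L = {}"
    and K_down: "\<And>z w v. (z, w) \<in> K \<Longrightarrow> 0 < v \<Longrightarrow> v \<le> w \<Longrightarrow> (z, v) \<in> K"
    and "y\<^sub>1 < y\<^sub>2"
    and l: "l \<in> L" "\<And>q. q \<in> K \<Longrightarrow> dist (x, y\<^sub>1) l \<le> dist (x, y\<^sub>1) q"
    and k: "k \<in> K" "\<And>q. q \<in> K \<union> L \<Longrightarrow> dist (x, y\<^sub>2) k \<le> dist (x, y\<^sub>2) q"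
  shows False
proof -
  obtain lz lw kz kw where lk: "l = (lz, lw)" "k = (kz, kw)" by fastforce
  have "f lz \<le> lw" "(kz, kw) \<in> K"
    using l(1) k(1) by (simp_all add: L_def mem_epigraph lk)
  have "0 < lw" using f_pos[of lz] \<open>f lz \<le> lw\<close> by linarith
  have "lw \<le> kw"
    using dist_vertical_exchange[OF \<open>y\<^sub>1 < y\<^sub>2\<close> l(2)[OF k(1)] k(2)] l(1) by (simp add: lk)
  have "dist x kz \<le> dist x lz"
    using k(2)[of "(lz, kw)"] \<open>f lz \<le> lw\<close> \<open>lw \<le> kw\<close>
    by (simp add: L_def mem_epigraph lk dist_Pair_same_height_le_iff)
  moreover have "dist x lz \<le> dist x kz"
    using l(2)[OF K_down[OF \<open>(kz, kw) \<in> K\<close> \<open>0 < lw\<close> \<open>lw \<le> kw\<close>]]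
    by (simp add: lk dist_Pair_same_height_le_iff)
  ultimately have same_horizontal: "dist x kz = dist x lz" by simp
  have "lw \<le> y\<^sub>1"
  proof (rule le_of_nearest_on_interval[OF \<open>0 < lw\<close>])
    fix v assume "0 < v" "v \<le> lw"
    with \<open>lw \<le> kw\<close> have "dist (x, y\<^sub>1) (lz, lw) \<le> dist (x, y\<^sub>1) (kz, v)"
      using l(2) K_down[OF \<open>(kz, kw) \<in> K\<close>] by (simp add: lk)
    also have "\<dots> = dist (x, y\<^sub>1) (lz, v)"
      by (simp add: dist_Pair_Pair same_horizontal)
    finally show "\<bar>y\<^sub>1 - lw\<bar> \<le> \<bar>y\<^sub>1 - v\<bar>"
      by (simp add: dist_Pair_same_base_le_iff)
  qed
  have "lz \<noteq> x"
  proof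
    assume "lz = x"
    then have "(x, kw) \<in> K \<inter> L"
      using same_horizontal \<open>(kz, kw) \<in> K\<close> \<open>f lz \<le> lw\<close> \<open>lw \<le> kw\<close>
      by (simp add: L_def mem_epigraph)
    with K_disj show False by blast
  qed
  moreover have "f lz < y\<^sub>2"
    using \<open>f lz \<le> lw\<close> \<open>lw \<le> y\<^sub>1\<close> \<open>y\<^sub>1 < y\<^sub>2\<close> by linarith
  moreover have "isCont f lz"
    using f_cont by (simp add: continuous_on_eq_continuous_at)
  ultimately obtain z' where "f z' < y\<^sub>2" "dist x z' < dist x lz"
    using sublevel_point_closer by metis
  have "dist (x, y\<^sub>2) (z', y\<^sub>2) = dist x z'"
    by (simp add: dist_Pair_Pair)
  also have "\<dots> < dist x kz"
    using \<open>dist x z' < dist x lz\<close> same_horizontal by simp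
  also have "\<dots> \<le> dist (x, y\<^sub>2) k"
    using dist_fst_le[of "(x, y\<^sub>2)" k] by (simp add: lk)
  finally have "dist (x, y\<^sub>2) (z', y\<^sub>2) < dist (x, y\<^sub>2) k" .
  moreover have "dist (x, y\<^sub>2) k \<le> dist (x, y\<^sub>2) (z', y\<^sub>2)"
    using k(2) \<open>f z' < y\<^sub>2\<close> by (simp add: L_def mem_epigraph)
  ultimately show False by simp
qed

theorem theorem3:
  fixes f :: "real^'n \<Rightarrow> real" and K :: "((real^'n) \<times> real) set"
  assumes f_cont: "continuous_on UNIV f"
    and f_pos: "\<And>x. f x > 0"
    and K_closed: "closed K"
    and K_disj: "K \<inter> {(x, y). f x \<le> y} = {}"
    and no_gap: "\<not> (\<exists>x0 y1 y2. 0 < y1 \<and> y1 < y2 \<and> (x0, y1) \<notin> K \<and> (x0, y2) \<in> K)"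
  shows "\<forall>x y1 y2.
           setdist_e (x, y1) K = setdist_e (x, y1) {(x, y). f x \<le> y} \<and>
           setdist_e (x, y2) K = setdist_e (x, y2) {(x, y). f x \<le> y}
           \<longrightarrow> y1 = y2"
proof (intro allI impI)
  let ?L = "epigraph UNIV f"
  have L_eq: "{(x, y). f x \<le> y} = ?L" by (auto simp: mem_epigraph)
  have "?L \<noteq> {}"
    using mem_epigraph[of 0 "f 0" UNIV f] by blast
  have K_down: "(z, v) \<in> K" if "(z, w) \<in> K" "0 < v" "v \<le> w" for z w v
    using no_gap that by (metis order_le_less)
  fix x y1 y2
  assume "setdist_e (x, y1) K = setdist_e (x, y1) {(x, y). f x \<le> y} \<and>
          setdist_e (x, y2) K = setdist_e (x, y2) {(x, y). f x \<le> y}"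
  then have eq: "setdist_e (x, y) K = setdist_e (x, y) ?L" if "y \<in> {y1, y2}" for y
    using that unfolding L_eq by blast
  have False if "a < b" and a: "a \<in> {y1, y2}" and b: "b \<in> {y1, y2}" for a b
  proof -
    obtain l where l: "l \<in> ?L" "\<And>q. q \<in> ?L \<union> K \<Longrightarrow> dist (x, a) l \<le> dist (x, a) q"
      using nearest_point_of_equidistant[OF closed_epigraph_UNIV[OF f_cont] _ eq[OF a, symmetric]]
        \<open>?L \<noteq> {}\<close> by blast
    obtain k where k: "k \<in> K" "\<And>q. q \<in> K \<union> ?L \<Longrightarrow> dist (x, b) k \<le> dist (x, b) q"
      using nearest_point_of_equidistant[OF K_closed _ eq[OF b]] \<open>?L \<noteq> {}\<close> by blast
    have "dist (x, a) l \<le> dist (x, a) q" if "q \<in> K" for q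
      using l(2) that by blast
    from no_equidistant_pair_on_vertical[OF f_cont f_pos K_disj[unfolded L_eq] K_down
        \<open>a < b\<close> l(1) this k]
    show False .
  qed
  then show "y1 = y2" by (metis insertCI linorder_neqE)
qed

end
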